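(* Let $G=(V,E)$ be a hypergraph, let $(Y_1,Y_2,W,Z)$ be a partition of $V$, and let $A_1:=Y_1\cup W$ and $A_2:=Y_2\cup W$. Then \[d(A_1)+d(A_2)=\sigma(Y_1,Y_2,W,Z).\]
   Context: A hypergraph $G=(V,E)$ has finite vertex set $V$ and finite multiset $E$ of hyperedges (subsets of $V$). For $X\subseteq V$, $d(X)$ is the number of hyperedges meeting both $X$ and $V\setminus X$. For a partition $(Y_1,\dots,Y_p,W,Z)$ of $V$: $\mathrm{cost}(Y_1,\dots,Y_p,W,Z)$ is the number of hyperedges meeting at least two of its parts; $\mathrm{cost}(W,Z)$ is the number of hyperedges $e$ with $e\subseteq W\cup Z$, $e\cap W\ne\emptyset$, $e\cap Z\neq\emptyset$; $\alpha(Y_1,\dots,Y_p,W,Z)$ is the number of hyperedges that meet $Z$ and meet at least two of the sets $Y_1,\dots,Y_p,W$; $\beta(Y_1,\dots,Y_p,Z)$ is the number of hyperedges disjoint from $Z$ that meet at least two of $Y_1,\dots,Y_p$; and $\sigma(Y_1,\dots,Y_p,W,Z):=\mathrm{cost}(Y_1,\dots,Y_p,W,Z)+\mathrm{cost}(W,Z)+\alpha(Y_1,\dots,Y_p,W,Z)+\beta(Y_1,\dots,Y_p,Z)$. *)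

theory Defs
  imports Main "HOL-Library.Multiset"
begin

definition hypergraph :: "'a set \<Rightarrow> 'a set multiset \<Rightarrow> bool" where
  "hypergraph V E \<longleftrightarrow> finite V \<and> (\<forall>e \<in># E. e \<subseteq> V)"

definition meets :: "'a set \<Rightarrow> 'a set \<Rightarrow> bool" where
  "meets e X \<longleftrightarrow> e \<inter> X \<noteq> {}"

definition dcut :: "'a set \<Rightarrow> 'a set multiset \<Rightarrow> 'a set \<Rightarrow> nat" where
  "dcut V E X = size (filter_mset (\<lambda>e. meets e X \<and> meets e (V - X)) E)"

definition num_met :: "'a set \<Rightarrow> 'a set list \<Rightarrow> nat" where
  "num_met e Ps = card {i. i < length Ps \<and> meets e (Ps ! i)}"

definition cost :: "'a set multiset \<Rightarrow> 'a set list \<Rightarrow> nat" where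
  "cost E Ps = size (filter_mset (\<lambda>e. 2 \<le> num_met e Ps) E)"

definition costWZ :: "'a set multiset \<Rightarrow> 'a set \<Rightarrow> 'a set \<Rightarrow> nat" where
  "costWZ E W Z = size (filter_mset (\<lambda>e. e \<subseteq> W \<union> Z \<and> meets e W \<and> meets e Z) E)"

definition alpha :: "'a set multiset \<Rightarrow> 'a set list \<Rightarrow> 'a set \<Rightarrow> 'a set \<Rightarrow> nat" where
  "alpha E Ys W Z = size (filter_mset (\<lambda>e. meets e Z \<and> 2 \<le> num_met e (Ys @ [W])) E)"

definition beta :: "'a set multiset \<Rightarrow> 'a set list \<Rightarrow> 'a set \<Rightarrow> nat" where
  "beta E Ys Z = size (filter_mset (\<lambda>e. \<not> meets e Z \<and> 2 \<le> num_met e Ys) E)"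

definition sigma :: "'a set multiset \<Rightarrow> 'a set list \<Rightarrow> 'a set \<Rightarrow> 'a set \<Rightarrow> nat" where
  "sigma E Ys W Z = cost E (Ys @ [W, Z]) + costWZ E W Z + alpha E Ys W Z + beta E Ys Z"

end

theory Submission
  imports Defs
begin

text \<open>Compare the contribution of a single hyperedge e to both sides. Since A1 and A2 are
  unions of parts, e crosses at least one of the two cuts exactly when it meets two parts, which
  is what cost counts. It crosses both cuts exactly when it meets W and Z but no Y_i, or meets Z
  and two of Y1, Y2, W, or avoids Z and meets Y1 and Y2; these disjoint cases are counted by
  cost(W,Z), alpha and beta.\<close>

lemma size_filter_mset_eq_sum_mset: "size (filter_mset P M) = (\<Sum>x\<in>#M. of_bool (P x))"
  by (induction M) simp_all

lemma meets_Un_iff: "meets e (A \<union> B) \<longleftrightarrow> meets e A \<or> meets e B"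
  unfolding meets_def by blast

lemma num_met_eq_length_filter: "num_met e Ps = length (filter (meets e) Ps)"
  unfolding num_met_def by (simp add: length_filter_conv_card)

lemma subset_Un_iff_not_meets:
  assumes "e \<subseteq> Y1 \<union> Y2 \<union> W \<union> Z" "(Y1 \<union> Y2) \<inter> (W \<union> Z) = {}"
  shows "e \<subseteq> W \<union> Z \<longleftrightarrow> \<not> meets e Y1 \<and> \<not> meets e Y2"
  using assms unfolding meets_def by blast

lemma edge_contribution:
  assumes "e \<subseteq> Y1 \<union> Y2 \<union> W \<union> Z" "(Y1 \<union> Y2) \<inter> (W \<union> Z) = {}"
  shows "(of_bool (meets e (Y1 \<union> W) \<and> meets e (Y2 \<union> Z)) :: nat)
           + of_bool (meets e (Y2 \<union> W) \<and> meets e (Y1 \<union> Z))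
         = of_bool (2 \<le> num_met e [Y1, Y2, W, Z])
           + of_bool (e \<subseteq> W \<union> Z \<and> meets e W \<and> meets e Z)
           + of_bool (meets e Z \<and> 2 \<le> num_met e [Y1, Y2, W])
           + of_bool (\<not> meets e Z \<and> 2 \<le> num_met e [Y1, Y2])"
  unfolding subset_Un_iff_not_meets[OF assms] meets_Un_iff num_met_eq_length_filter
  by (cases "meets e Y1"; cases "meets e Y2"; cases "meets e W"; cases "meets e Z") simp_all

theorem proposition3p2:
  fixes V :: "'a set" and E :: "'a set multiset" and Y1 Y2 W Z :: "'a set"
  assumes "hypergraph V E"
    and "Y1 \<union> Y2 \<union> W \<union> Z = V"
    and "Y1 \<inter> Y2 = {}" "Y1 \<inter> W = {}" "Y1 \<inter> Z = {}"
    and "Y2 \<inter> W = {}" "Y2 \<inter> Z = {}" "W \<inter> Z = {}"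
  shows "dcut V E (Y1 \<union> W) + dcut V E (Y2 \<union> W) = sigma E [Y1, Y2] W Z"
proof -
  have complements: "V - (Y1 \<union> W) = Y2 \<union> Z" "V - (Y2 \<union> W) = Y1 \<union> Z"
    using assms(2-8) by auto
  have disjoint: "(Y1 \<union> Y2) \<inter> (W \<union> Z) = {}"
    using assms(4-7) by blast
  have edges_covered: "e \<subseteq> Y1 \<union> Y2 \<union> W \<union> Z" if "e \<in># E" for e
    using assms(1,2) that unfolding hypergraph_def by blast
  show ?thesis
    unfolding dcut_def sigma_def cost_def costWZ_def alpha_def beta_def complements
      size_filter_mset_eq_sum_mset sum_mset.distrib[symmetric] append_Cons append_Nil
    using edge_contribution[OF edges_covered disjoint] by (intro arg_cong[where f = sum_mset] image_mset_cong)
qed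

end
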